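(* For every $k\ge 3$, $$\sum_{n\ge0}|S_n(123,\,3214,\,21(k+1)k(k-1)\cdots 43)|\,x^n=\frac{1-2x+x^k}{1-3x+x^2+x^k}.$$ *)

theory Defs
  imports "HOL-Combinatorics.Multiset_Permutations" "HOL-Computational_Algebra.Formal_Power_Series"
begin

text \<open>Permutations of [n] in one-line notation are lists in permutations_of_set {1..n}.
A word w contains pattern p if some subsequence of w (at strictly increasing positions)
is order-isomorphic to p.\<close>

definition contains_pattern :: "nat list \<Rightarrow> nat list \<Rightarrow> bool" where
  "contains_pattern w p \<longleftrightarrow>
     (\<exists>is. length is = length p \<and> sorted_wrt (<) is \<and> (\<forall>i\<in>set is. i < length w) \<and>
        (\<forall>a<length p. \<forall>b<length p. (p ! a < p ! b \<longleftrightarrow> w ! (is ! a) < w ! (is ! b))))"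

definition avoiding_perms :: "nat \<Rightarrow> nat list set \<Rightarrow> nat list set" where
  "avoiding_perms n P = {w \<in> permutations_of_set {1..n}. \<forall>p\<in>P. \<not> contains_pattern w p}"

definition long_pattern :: "nat \<Rightarrow> nat list" where
  "long_pattern k = [2, 1] @ rev [3..<k+2]"

end

theory Submission
  imports Defs "HOL-Library.Sublist"
begin

text \<open>
  Let \<open>w\<close> avoid 123, 3214 and 2 1 (k+1) k ... 3, and let \<open>n\<close> be its largest entry.
  Avoiding 123 and 3214 forces \<open>n\<close> into one of the first three positions. If \<open>n\<close> comes
  first or second, deleting it leaves an arbitrary avoider of length \<open>n - 1\<close>. If \<open>w = x y n q\<close>,
  then \<open>y < x\<close> and \<open>w = x y n (n-1) ... (x+1) E\<close> with all entries of \<open>E\<close> below \<open>x\<close>; the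
  long pattern bounds the length \<open>l = n - x\<close> of the decreasing run by \<open>k - 2\<close>, and \<open>y E\<close> is an
  arbitrary avoider of length \<open>x - 1\<close>. Conversely each of these insertions of a new maximum
  preserves avoidance, so the numbers \<open>a n\<close> of avoiders satisfy \<open>a 0 = a 1 = 1\<close> and
  \<open>a n = a (n - 1) + (\<Sum>l\<le>min (k - 2) (n - 2). a (n - l - 1))\<close> for \<open>n \<ge> 2\<close>.
  With \<open>G = (\<Sum>l<k - 1. X ^ l)\<close> this says \<open>B = X + X B + X G B\<close> for the generating function
  \<open>B = (\<Sum>n\<ge>1. a n X ^ n)\<close>; multiplying by \<open>1 - X\<close> and using \<open>(1 - X) G = 1 - X ^ (k - 1)\<close>
  gives the rational function.
\<close>

lemma set_mono_subseq: "subseq xs ys \<Longrightarrow> set xs \<subseteq> set ys"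
  by (induction rule: list_emb.induct) auto

lemma distinct_subseq: "distinct ys \<Longrightarrow> subseq xs ys \<Longrightarrow> distinct xs"
  by (auto simp: subseq_conv_nths)

lemma subseq_pair_Cons:
  "subseq [a, b] (x # xs) \<longleftrightarrow> (a = x \<and> b \<in> set xs) \<or> subseq [a, b] xs"
  by (cases "a = x") (auto simp: subseq_singleton_left dest: set_mono_subseq)

lemma sorted_wrt_iff_subseq_pairs:
  "sorted_wrt R xs \<longleftrightarrow> (\<forall>a b. subseq [a, b] xs \<longrightarrow> R a b)"
  by (induction xs)
    (auto simp: subseq_pair_Cons simp del: list_emb_Cons_iff1 list_emb_Cons_iff2 subseq_Cons2_iff)

lemma sorted_wrt_greater_eq_rev_upt:
  assumes "sorted_wrt (>) xs" "set xs = {a..<b}"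
  shows "xs = rev [a..<b]"
proof -
  have "sorted_wrt (<) (rev xs)" using assms(1) by (simp add: sorted_wrt_rev)
  then have "rev xs = [a..<b]"
    using assms(2) by (intro sorted_distinct_set_unique) (auto simp: strict_sorted_iff)
  then show ?thesis by (simp add: rev_swap)
qed

lemma subseq_iff_sorted_indices:
  "subseq s w \<longleftrightarrow>
     (\<exists>ix. sorted_wrt (<) ix \<and> (\<forall>i\<in>set ix. i < length w) \<and> s = map ((!) w) ix)"
proof
  show "subseq s w \<Longrightarrow> \<exists>ix. sorted_wrt (<) ix \<and> (\<forall>i\<in>set ix. i < length w) \<and> s = map ((!) w) ix"
  proof (induction rule: list_emb.induct)
    case (list_emb_Nil w)
    show ?case by (intro exI[of _ "[]"]) auto
  next
    case (list_emb_Cons s w y)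
    then obtain ix where "sorted_wrt (<) ix" "\<forall>i\<in>set ix. i < length w" "s = map ((!) w) ix"
      by blast
    then show ?case by (intro exI[of _ "map Suc ix"]) (auto simp: sorted_wrt_map)
  next
    case (list_emb_Cons2 x y s w)
    then obtain ix where "sorted_wrt (<) ix" "\<forall>i\<in>set ix. i < length w" "s = map ((!) w) ix"
      by blast
    then show ?case using list_emb_Cons2 by (intro exI[of _ "0 # map Suc ix"]) (auto simp: sorted_wrt_map)
  qed
next
  assume "\<exists>ix. sorted_wrt (<) ix \<and> (\<forall>i\<in>set ix. i < length w) \<and> s = map ((!) w) ix"
  then obtain ix where "sorted_wrt (<) ix" "\<forall>i\<in>set ix. i < length w" "s = map ((!) w) ix"
    by blast
  moreover have "subseq (map ((!) w) ix) (drop m w)"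
    if "sorted_wrt (<) ix" "\<forall>i\<in>set ix. m \<le> i \<and> i < length w" for ix m
    using that
  proof (induction ix arbitrary: m)
    case (Cons i js)
    have "subseq (map ((!) w) js) (drop (Suc i) w)"
      using Cons.prems by (intro Cons.IH) auto
    moreover have "drop m w = take (i - m) (drop m w) @ w ! i # drop (Suc i) w"
      using Cons.prems id_take_nth_drop[of "i - m" "drop m w"] by fastforce
    ultimately show ?case by (metis list.simps(9) subseq_Cons2 subseq_drop_many)
  qed simp
  ultimately show "subseq s w" by (metis drop_0 le0)
qed

lemma subseq_append_Cons_cases:
  assumes "subseq s (xs @ n # ys)"
  obtains "subseq s (xs @ ys)"
  | s1 s2 where "s = s1 @ n # s2" "subseq s1 xs" "subseq s2 ys"
proof -
  obtain p q where s: "s = p @ q" "subseq p xs" "subseq q (n # ys)"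
    using assms by (auto simp: subseq_append_iff)
  show thesis
  proof (cases "\<exists>q'. q = n # q' \<and> subseq q' ys")
    case True
    then show thesis using s that(2) by blast
  next
    case False
    with s(3) have "subseq q ys"
      by (cases q) (auto split: if_splits simp: list_emb_Cons_iff2)
    then show thesis using s that(1) by (simp add: list_emb_append_mono)
  qed
qed

definition order_iso :: "nat list \<Rightarrow> nat list \<Rightarrow> bool" where
  "order_iso p s \<longleftrightarrow> length s = length p \<and>
     (\<forall>a<length p. \<forall>b<length p. p ! a < p ! b \<longleftrightarrow> s ! a < s ! b)"

lemma contains_pattern_iff_subseq:
  "contains_pattern w p \<longleftrightarrow> (\<exists>s. subseq s w \<and> order_iso p s)"
proof
  assume "contains_pattern w p"
  then obtain ix where "length ix = length p" "sorted_wrt (<) ix" "\<forall>i\<in>set ix. i < length w"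
    "\<forall>a<length p. \<forall>b<length p. p ! a < p ! b \<longleftrightarrow> w ! (ix ! a) < w ! (ix ! b)"
    unfolding contains_pattern_def by blast
  then show "\<exists>s. subseq s w \<and> order_iso p s"
    by (intro exI[of _ "map ((!) w) ix"]) (auto simp: subseq_iff_sorted_indices order_iso_def)
next
  assume "\<exists>s. subseq s w \<and> order_iso p s"
  then obtain ix where "sorted_wrt (<) ix" "\<forall>i\<in>set ix. i < length w" "order_iso p (map ((!) w) ix)"
    unfolding subseq_iff_sorted_indices by blast
  then show "contains_pattern w p"
    unfolding contains_pattern_def by (intro exI[of _ ix]) (auto simp: order_iso_def)
qed

lemma order_iso_Nil [simp]: "order_iso [] s \<longleftrightarrow> s = []"
  by (simp add: order_iso_def)

lemma order_iso_Cons: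
  "order_iso (x # xs) s \<longleftrightarrow> (\<exists>y ys. s = y # ys \<and> order_iso xs ys \<and>
     (\<forall>i<length xs. (x < xs ! i \<longleftrightarrow> y < ys ! i) \<and> (xs ! i < x \<longleftrightarrow> ys ! i < y)))"
  by (cases s) (auto simp: order_iso_def All_less_Suc2)

lemma order_iso_Cons_Cons:
  "order_iso (x # xs) (y # ys) \<longleftrightarrow> order_iso xs ys \<and>
     (\<forall>i<length xs. (x < xs ! i \<longleftrightarrow> y < ys ! i) \<and> (xs ! i < x \<longleftrightarrow> ys ! i < y))"
  by (simp add: order_iso_Cons)

lemma order_iso_strictly_decreasing:
  assumes "sorted_wrt (>) p"
  shows "order_iso p s \<longleftrightarrow> length s = length p \<and> sorted_wrt (>) s"
proof -
  have nth_less_iff: "xs ! a < xs ! b \<longleftrightarrow> b < a"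
    if "sorted_wrt (>) xs" "a < length xs" "b < length xs" for xs :: "nat list" and a b
    using sorted_wrt_nth_less[OF that(1)] that(2,3) by (metis less_asym linorder_neqE_nat)
  show ?thesis
  proof
    assume "order_iso p s"
    then show "length s = length p \<and> sorted_wrt (>) s"
      unfolding order_iso_def sorted_wrt_iff_nth_less using nth_less_iff[OF assms]
      by (metis order.strict_trans)
  next
    assume "length s = length p \<and> sorted_wrt (>) s"
    then show "order_iso p s"
      unfolding order_iso_def using nth_less_iff assms by auto
  qed
qed

lemma contains_123_iff:
  "contains_pattern w [1, 2, 3] \<longleftrightarrow> (\<exists>a b c. subseq [a, b, c] w \<and> a < b \<and> b < c)"
proof -
  have "order_iso [1, 2, 3] s \<longleftrightarrow> (\<exists>a b c. s = [a, b, c] \<and> a < b \<and> b < c)" for s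
  proof
    assume iso: "order_iso [1, 2, 3] s"
    then have "length s = Suc (Suc (Suc 0))" by (simp add: order_iso_def)
    then obtain a b c where "s = [a, b, c]" by (auto simp: length_Suc_conv)
    with iso show "\<exists>a b c. s = [a, b, c] \<and> a < b \<and> b < c"
      by (simp add: order_iso_Cons_Cons All_less_Suc2)
  qed (auto simp: order_iso_Cons_Cons All_less_Suc2)
  then show ?thesis
    unfolding contains_pattern_iff_subseq by auto
qed

lemma contains_3214_iff:
  "contains_pattern w [3, 2, 1, 4] \<longleftrightarrow> (\<exists>a b c d. subseq [a, b, c, d] w \<and> c < b \<and> b < a \<and> a < d)"
proof -
  have "order_iso [3, 2, 1, 4] s \<longleftrightarrow> (\<exists>a b c d. s = [a, b, c, d] \<and> c < b \<and> b < a \<and> a < d)" for s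
  proof
    assume iso: "order_iso [3, 2, 1, 4] s"
    then have "length s = Suc (Suc (Suc (Suc 0)))" by (simp add: order_iso_def)
    then obtain a b c d where "s = [a, b, c, d]" by (auto simp: length_Suc_conv)
    with iso show "\<exists>a b c d. s = [a, b, c, d] \<and> c < b \<and> b < a \<and> a < d"
      by (simp add: order_iso_Cons_Cons All_less_Suc2)
  qed (auto simp: order_iso_Cons_Cons All_less_Suc2)
  then show ?thesis
    unfolding contains_pattern_iff_subseq by auto
qed

lemma contains_long_pattern_iff:
  "contains_pattern w (long_pattern k) \<longleftrightarrow>
    (\<exists>a b ds. subseq (a # b # ds) w \<and> b < a \<and> length ds = k - 1 \<and> sorted_wrt (>) ds \<and>
       (\<forall>d\<in>set ds. a < d))"
proof -
  define p where "p = rev [3..<k+2]"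
  have lp: "long_pattern k = 2 # 1 # p" by (simp add: long_pattern_def p_def)
  have len: "length p = k - 1" and dec: "sorted_wrt (>) p"
    unfolding p_def sorted_wrt_rev by (simp_all del: upt_Suc)
  have big: "2 < p ! i" "\<not> p ! i < 2" "Suc 0 < p ! i" "p ! i \<noteq> 0" if "i < k - 1" for i
    using nth_mem[of i p] that len unfolding p_def by (simp_all del: upt_Suc)
  have "order_iso (long_pattern k) (a # b # ds) \<longleftrightarrow>
      b < a \<and> length ds = k - 1 \<and> sorted_wrt (>) ds \<and> (\<forall>d\<in>set ds. a < d)" for a b ds
    using len unfolding lp order_iso_Cons order_iso_strictly_decreasing[OF dec]
    by (auto simp: big all_set_conv_all_nth All_less_Suc2 dest: order.strict_trans)
  moreover have "order_iso (long_pattern k) s \<Longrightarrow> \<exists>a b ds. s = a # b # ds" for s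
    unfolding lp order_iso_Cons by auto
  ultimately show ?thesis
    unfolding contains_pattern_iff_subseq by metis
qed

definition has_123 :: "nat list \<Rightarrow> bool" where
  "has_123 w \<longleftrightarrow> (\<exists>a b c. subseq [a, b, c] w \<and> a < b \<and> b < c)"

definition has_3214 :: "nat list \<Rightarrow> bool" where
  "has_3214 w \<longleftrightarrow> (\<exists>a b c d. subseq [a, b, c, d] w \<and> c < b \<and> b < a \<and> a < d)"

definition has_long :: "nat \<Rightarrow> nat list \<Rightarrow> bool" where
  "has_long k w \<longleftrightarrow> (\<exists>a b ds. subseq (a # b # ds) w \<and> b < a \<and> length ds = k - 1 \<and>
     sorted_wrt (>) ds \<and> (\<forall>d\<in>set ds. a < d))"

definition avoids_patterns :: "nat \<Rightarrow> nat list \<Rightarrow> bool" where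
  "avoids_patterns k w \<longleftrightarrow> \<not> has_123 w \<and> \<not> has_3214 w \<and> \<not> has_long k w"

definition Av :: "nat \<Rightarrow> nat \<Rightarrow> nat list set" where
  "Av k n = {w \<in> permutations_of_set {1..n}. avoids_patterns k w}"

lemma avoiding_perms_eq_Av:
  "avoiding_perms n {[1, 2, 3], [3, 2, 1, 4], long_pattern k} = Av k n"
  unfolding avoiding_perms_def Av_def avoids_patterns_def has_123_def has_3214_def has_long_def
  using contains_123_iff contains_3214_iff contains_long_pattern_iff by auto

lemma Av_iff: "w \<in> Av k n \<longleftrightarrow> set w = {1..n} \<and> distinct w \<and> avoids_patterns k w"
  by (auto simp: Av_def permutations_of_set_def)

lemma finite_Av: "finite (Av k n)"
  by (simp add: Av_def)

lemma Av_nonempty: "u \<in> Av k m \<Longrightarrow> m \<ge> 1 \<Longrightarrow> u \<noteq> []"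
  by (auto simp: Av_iff)

lemma has_123_subseq: "subseq v w \<Longrightarrow> has_123 v \<Longrightarrow> has_123 w"
  unfolding has_123_def by (meson subseq_order.trans)

lemma avoids_patterns_subseq:
  "subseq v w \<Longrightarrow> avoids_patterns k w \<Longrightarrow> avoids_patterns k v"
  unfolding avoids_patterns_def has_123_def has_3214_def has_long_def
  by (meson subseq_order.trans)

lemma avoids_patterns_short: "length w \<le> 1 \<Longrightarrow> avoids_patterns k w"
  unfolding avoids_patterns_def has_123_def has_3214_def has_long_def
  by (auto dest!: list_emb_length)

lemma card_Av_0: "card (Av k 0) = 1"
proof -
  have "Av k 0 = {[]}" using avoids_patterns_short by (auto simp: Av_def)
  then show ?thesis by simp
qed

lemma card_Av_1: "card (Av k 1) = 1"
proof -
  have "Av k 1 = {[1]}" using avoids_patterns_short by (auto simp: Av_def)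
  then show ?thesis by simp
qed

section \<open>Inserting a new maximum\<close>

lemma subseq_insert_max_le:
  fixes n :: "'a::order"
  assumes "subseq s (xs @ n # ys)" "\<forall>z\<in>set (xs @ ys). z < n"
  shows "\<forall>z\<in>set s. z \<le> n"
proof
  fix z assume "z \<in> set s"
  then have "z \<in> set (xs @ n # ys)" using set_mono_subseq[OF assms(1)] by blast
  then show "z \<le> n" using assms(2) by (auto intro: less_imp_le)
qed

lemma has_123_insert_max:
  assumes "has_123 (xs @ n # ys)" "\<forall>z\<in>set (xs @ ys). z < n"
  shows "has_123 (xs @ ys) \<or> (\<exists>a b. subseq [a, b] xs \<and> a < b)"
proof -
  obtain a b c where abc: "subseq [a, b, c] (xs @ n # ys)" "a < b" "b < c"
    using assms(1) unfolding has_123_def by blast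
  have "c \<le> n" using subseq_insert_max_le[OF abc(1) assms(2)] by simp
  show ?thesis
  proof (cases rule: subseq_append_Cons_cases[OF abc(1)])
    case 1
    then show ?thesis using abc unfolding has_123_def by blast
  next
    case (2 s1 s2)
    with abc \<open>c \<le> n\<close> have "s1 = [a, b]" by (auto simp: Cons_eq_append_conv)
    then show ?thesis using 2 abc by blast
  qed
qed

lemma has_3214_insert_max:
  assumes "has_3214 (xs @ n # ys)" "\<forall>z\<in>set (xs @ ys). z < n"
  shows "has_3214 (xs @ ys) \<or> 3 \<le> length xs"
proof -
  obtain a b c d where abcd: "subseq [a, b, c, d] (xs @ n # ys)" "c < b" "b < a" "a < d"
    using assms(1) unfolding has_3214_def by blast
  have "d \<le> n" using subseq_insert_max_le[OF abcd(1) assms(2)] by simp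
  show ?thesis
  proof (cases rule: subseq_append_Cons_cases[OF abcd(1)])
    case 1
    then show ?thesis using abcd unfolding has_3214_def by blast
  next
    case (2 s1 s2)
    with abcd \<open>d \<le> n\<close> have "s1 = [a, b, c]" by (auto simp: Cons_eq_append_conv)
    then show ?thesis using list_emb_length[OF 2(2)] by simp
  qed
qed

definition has_decreasing_above :: "nat \<Rightarrow> nat \<Rightarrow> nat list \<Rightarrow> bool" where
  "has_decreasing_above m x w \<longleftrightarrow>
     (\<exists>ds. subseq ds w \<and> length ds = m \<and> sorted_wrt (>) ds \<and> (\<forall>d\<in>set ds. x < d))"

lemma has_long_insert_max:
  assumes "has_long k (xs @ n # ys)" "\<forall>z\<in>set (xs @ ys). z < n" "k \<ge> 2"
  shows "has_long k (xs @ ys) \<or> (\<exists>a b. subseq [a, b] xs \<and> b < a \<and> has_decreasing_above (k - 2) a ys)"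
proof -
  obtain a b ds where h: "subseq (a # b # ds) (xs @ n # ys)" "b < a" "length ds = k - 1"
    "sorted_wrt (>) ds" "\<forall>d\<in>set ds. a < d"
    using assms(1) unfolding has_long_def by blast
  have le: "\<forall>z\<in>set (a # b # ds). z \<le> n" using subseq_insert_max_le[OF h(1) assms(2)] .
  show ?thesis
  proof (cases rule: subseq_append_Cons_cases[OF h(1)])
    case 1
    then show ?thesis using h unfolding has_long_def by blast
  next
    case (2 s1 s2)
    obtain d ds' where ds: "ds = d # ds'" using h(3) assms(3) by (cases ds) auto
    have "a < n" using h(5) le ds by fastforce
    then obtain r where s1: "s1 = a # b # r" and r: "ds = r @ n # s2"
      using 2(1) h(2) by (cases s1; cases "tl s1") (auto simp: Cons_eq_append_conv)
    have "r = []"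
    proof (rule ccontr)
      assume "r \<noteq> []"
      then obtain u where "u \<in> set r" by (cases r) auto
      then have "n < u" "u \<le> n" using h(4) le r by (auto simp: sorted_wrt_append)
      then show False by simp
    qed
    then have "has_decreasing_above (k - 2) a ys"
      unfolding has_decreasing_above_def using 2(3) h(3-5) r by (intro exI[of _ s2]) auto
    moreover have "subseq [a, b] xs" using 2(2) s1 \<open>r = []\<close> by simp
    ultimately show ?thesis using h(2) by blast
  qed
qed

lemma avoids_patterns_insert_max:
  assumes "avoids_patterns k (xs @ ys)" "\<forall>z\<in>set (xs @ ys). z < n" "length xs \<le> 2" "k \<ge> 2"
    and "\<And>a b. xs = [a, b] \<Longrightarrow> b < a \<and> \<not> has_decreasing_above (k - 2) a ys"
  shows "avoids_patterns k (xs @ n # ys)"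
proof -
  have pair: "xs = [a, b]" if "subseq [a, b] xs" for a b
    using subseq_same_length[OF that] list_emb_length[OF that] assms(3) by simp
  show ?thesis
    using has_123_insert_max[of xs n ys] has_3214_insert_max[of xs n ys]
      has_long_insert_max[of k xs n ys] assms pair
    unfolding avoids_patterns_def by fastforce
qed

lemma has_decreasing_above_le_card:
  assumes "has_decreasing_above m x ys"
  shows "m \<le> card {z \<in> set ys. x < z}"
proof -
  obtain ds where ds: "subseq ds ys" "length ds = m" "sorted_wrt (>) ds" "\<forall>d\<in>set ds. x < d"
    using assms unfolding has_decreasing_above_def by blast
  have "distinct ds" using ds(3) by (induction ds) auto
  then have "m = card (set ds)" using ds(2) by (simp add: distinct_card)
  also have "\<dots> \<le> card {z \<in> set ys. x < z}"
    using set_mono_subseq[OF ds(1)] ds(4) by (intro card_mono) auto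
  finally show ?thesis .
qed

lemma Av_insert_max:
  assumes "xs @ ys \<in> Av k n" "length xs \<le> 2" "k \<ge> 2"
    and "\<And>a b. xs = [a, b] \<Longrightarrow> b < a \<and> \<not> has_decreasing_above (k - 2) a ys"
  shows "xs @ Suc n # ys \<in> Av k (Suc n)"
proof -
  have set: "set (xs @ ys) = {1..n}" and dist: "distinct (xs @ ys)"
    and av: "avoids_patterns k (xs @ ys)"
    using assms(1) by (auto simp: Av_iff)
  have "\<forall>z\<in>set (xs @ ys). z < Suc n" using set by auto
  then have "avoids_patterns k (xs @ Suc n # ys)"
    using avoids_patterns_insert_max[OF av _ assms(2,3)] assms(4) by blast
  moreover have "Suc n \<notin> set (xs @ ys)" using set by simp
  then have "distinct (xs @ Suc n # ys)" using dist by auto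
  moreover have "set (xs @ Suc n # ys) = {1..Suc n}" using set by auto
  ultimately show ?thesis by (simp add: Av_iff)
qed

section \<open>Removing the maximum\<close>

lemma length_prefix_before_max:
  assumes "\<not> has_123 (p @ n # q)" "\<not> has_3214 (p @ n # q)" "distinct p" "\<forall>z\<in>set p. z < n"
  shows "length p \<le> 2"
proof (rule ccontr)
  assume "\<not> length p \<le> 2"
  then obtain a b c p' where p: "p = a # b # c # p'"
    by (metis Suc_le_length_iff numeral_2_eq_2 not_less_eq_eq)
  have "a \<noteq> b" "b \<noteq> c" "c < n" "b < n" "a < n" using assms(3,4) p by auto
  moreover have "subseq [a, b, n] (p @ n # q)" "subseq [b, c, n] (p @ n # q)"
    unfolding p by (simp_all add: subseq_drop_many)
  ultimately have "b < a" "c < b"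
    using assms(1) unfolding has_123_def by (meson linorder_neqE_nat)+
  moreover have "subseq [a, b, c, n] (p @ n # q)"
    unfolding p by (simp add: subseq_drop_many)
  ultimately show False
    using assms(2) \<open>a < n\<close> unfolding has_3214_def by blast
qed

lemma low_before_high_is_second:
  assumes "\<not> has_123 (x # y # q)" "\<not> has_3214 (x # y # q)" "y < x"
    and "subseq [t, z] q" "t < x" "x < z"
  shows "t = y"
proof (rule ccontr)
  assume "t \<noteq> y"
  then consider "t < y" | "y < t" by linarith
  then show False
  proof cases
    case 1
    have "subseq [x, y, t, z] (x # y # q)" using assms(4) by (intro subseq_Cons2)
    then show False using assms(2,3,6) 1 unfolding has_3214_def by blast
  next
    case 2
    have "subseq [y, t, z] (x # y # q)" using assms(4) by (intro list_emb_Cons subseq_Cons2)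
    then show False using assms(1,5,6) 2 unfolding has_123_def by (meson order.strict_trans)
  qed
qed

lemma takeWhile_above_decreasing:
  assumes "\<not> has_123 (x # q)" "distinct q"
  shows "sorted_wrt (>) (takeWhile (\<lambda>z. x < z) q)"
  unfolding sorted_wrt_iff_subseq_pairs
proof (intro allI impI)
  fix a b assume ab: "subseq [a, b] (takeWhile (\<lambda>z. x < z) q)"
  then have sub: "subseq [a, b] q"
    using prefix_imp_subseq[OF takeWhile_is_prefix] subseq_order.trans by blast
  have "x < a" using set_mono_subseq[OF ab] by (auto dest: set_takeWhileD)
  moreover have "subseq [x, a, b] (x # q)" using sub by (rule subseq_Cons2)
  ultimately have "\<not> a < b" using assms(1) unfolding has_123_def by blast
  moreover have "a \<noteq> b" using distinct_subseq[OF assms(2) sub] by simp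
  ultimately show "b < a" by simp
qed

lemma dropWhile_above_below:
  assumes "\<not> has_123 (x # y # q)" "\<not> has_3214 (x # y # q)" "y < x" "distinct (x # y # q)"
  shows "\<forall>z\<in>set (dropWhile (\<lambda>z. x < z) q). z < x"
proof (rule ccontr)
  let ?E = "dropWhile (\<lambda>z. x < z) q"
  assume "\<not> (\<forall>z\<in>set ?E. z < x)"
  then obtain z where z: "z \<in> set ?E" "x \<le> z" by auto
  then obtain t E' where E: "?E = t # E'" by (cases ?E) auto
  have "t \<in> set q" "z \<in> set q"
    using set_dropWhileD[of _ "\<lambda>z. x < z" q] z(1) unfolding E by auto
  then have "t \<noteq> x" "z \<noteq> x" "t \<noteq> y" using assms(4) by auto
  moreover have "\<not> x < t" using hd_dropWhile[of "\<lambda>z. x < z" q] E by auto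
  ultimately have "t < x" "x < z" "t \<noteq> y" using z(2) by auto
  moreover have "subseq [t, z] q"
  proof -
    have "z \<in> set E'" using z E \<open>t < x\<close> \<open>x < z\<close> by auto
    then have "subseq [t, z] ?E" unfolding E by (simp add: subseq_singleton_left)
    then have "subseq [t, z] (takeWhile (\<lambda>z. x < z) q @ ?E)" by (rule subseq_drop_many)
    then show ?thesis by simp
  qed
  ultimately show False using low_before_high_is_second[OF assms(1-3)] by blast
qed

definition insert_second :: "nat \<Rightarrow> nat list \<Rightarrow> nat list" where
  "insert_second n v = hd v # n # tl v"

text \<open>\<open>insert_block n l u = (n-l) u\<^sub>1 n (n-1) ... (n-l+1) u\<^sub>2 u\<^sub>3 ...\<close>; for \<open>l = 0\<close> it is \<open>n # u\<close>.\<close>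

definition insert_block :: "nat \<Rightarrow> nat \<Rightarrow> nat list \<Rightarrow> nat list" where
  "insert_block n l u = (n - l) # hd u # rev [n - l + 1..<n + 1] @ tl u"

lemma Av_delete_max:
  assumes "p @ n # q \<in> Av k n"
  shows "p @ q \<in> Av k (n - 1)"
proof -
  have "set (p @ q) = {1..n} - {n}" "distinct (p @ q)" "avoids_patterns k (p @ n # q)"
    using assms by (auto simp: Av_iff)
  moreover have "subseq q (n # q)" by (rule list_emb_Cons) (rule subseq_order.order_refl)
  then have "subseq (p @ q) (p @ n # q)" by (simp add: subseq_append')
  ultimately show ?thesis
    using avoids_patterns_subseq by (auto simp: Av_iff)
qed

lemma Av_max_third_shape:
  assumes "x # y # n # q \<in> Av k n"
  obtains E where "y < x" "n # q = rev [x + 1..<n + 1] @ E" "\<forall>e\<in>set E. e < x"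
proof -
  let ?w = "x # y # n # q"
  have set_w: "set ?w = {1..n}" and dist: "distinct ?w"
    and no: "\<not> has_123 ?w" "\<not> has_3214 ?w"
    using assms(1) by (auto simp: Av_iff avoids_patterns_def)
  have "x < n" "y < n" using set_w dist by (auto simp: order.order_iff_strict)
  have yx: "y < x"
  proof (rule ccontr)
    assume "\<not> y < x"
    then have "x < y" using dist by simp
    moreover have "subseq [x, y, n] ?w" by simp
    ultimately show False using no(1) \<open>y < n\<close> unfolding has_123_def by blast
  qed
  define D where "D = takeWhile (\<lambda>z. x < z) (n # q)"
  define E where "E = dropWhile (\<lambda>z. x < z) (n # q)"
  have nq: "n # q = D @ E" unfolding D_def E_def by simp
  have E_below: "\<forall>e\<in>set E. e < x"
    unfolding E_def using dropWhile_above_below[of x y "n # q"] no(1,2) yx dist by blast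
  have "subseq (n # q) (y # n # q)" by (rule list_emb_Cons) (rule subseq_order.order_refl)
  then have "\<not> has_123 (x # n # q)"
    using no(1) has_123_subseq[of "x # n # q" ?w] by auto
  then have D_dec: "sorted_wrt (>) D"
    unfolding D_def using takeWhile_above_decreasing[of x "n # q"] dist by simp
  have D_set: "set D = {x + 1..<n + 1}"
  proof
    show "set D \<subseteq> {x + 1..<n + 1}"
    proof
      fix z assume "z \<in> set D"
      then have "z \<in> set (n # q) \<and> x < z" unfolding D_def by (rule set_takeWhileD)
      then show "z \<in> {x + 1..<n + 1}" using set_w by auto
    qed
    show "{x + 1..<n + 1} \<subseteq> set D"
    proof
      fix z assume z: "z \<in> {x + 1..<n + 1}"
      have "z \<in> set ?w" unfolding set_w using z by simp
      then have "z \<in> set (n # q)" using z yx by auto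
      then show "z \<in> set D" using nq E_below z by auto
    qed
  qed
  have D: "D = rev [x + 1..<n + 1]"
    using D_dec D_set by (rule sorted_wrt_greater_eq_rev_upt)
  show thesis using that yx nq E_below unfolding D by blast
qed

lemma decreasing_run_length_bound:
  assumes "\<not> has_long k (x # y # ds @ E)" "y < x" "sorted_wrt (>) ds" "\<forall>d\<in>set ds. x < d"
  shows "length ds \<le> k - 2"
proof (rule ccontr)
  assume "\<not> length ds \<le> k - 2"
  then have "length (take (k - 1) ds) = k - 1" by simp
  moreover have "subseq (x # y # take (k - 1) ds) (x # y # ds @ E)"
    by (simp add: prefix_imp_subseq subseq_rev_drop_many take_is_prefix)
  moreover have "sorted_wrt (>) (take (k - 1) ds)" using assms(3) by (rule sorted_wrt_take)
  moreover have "\<forall>d\<in>set (take (k - 1) ds). x < d" using assms(4) by (auto dest: in_set_takeD)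
  ultimately show False using assms(1,2) unfolding has_long_def by blast
qed

lemma Av_max_third:
  assumes w: "x # y # n # q \<in> Av k n"
  shows "\<exists>l\<le>min (k - 2) (n - 2). \<exists>u\<in>Av k (n - l - 1). x # y # n # q = insert_block n l u"
proof -
  obtain E where E: "y < x" "n # q = rev [x + 1..<n + 1] @ E" "\<forall>e\<in>set E. e < x"
    using Av_max_third_shape[OF w] .
  let ?w = "x # y # rev [x + 1..<n + 1] @ E"
  have "?w \<in> Av k n" using w unfolding E(2) .
  then have set_w: "set ?w = {1..n}" and dist: "distinct ?w" and av: "avoids_patterns k ?w"
    unfolding Av_iff by blast+
  have "n - x \<le> k - 2"
    using decreasing_run_length_bound[of k x y "rev [x + 1..<n + 1]" E] av E(1)
    by (simp add: avoids_patterns_def sorted_wrt_rev del: upt_Suc)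
  have "x \<in> set ?w" "y \<in> set ?w" by (simp_all del: upt_Suc)
  then have x: "x \<in> {1..n}" and y: "y \<in> {1..n}" by (simp_all only: set_w)
  have "set (y # E) = set ?w \<inter> {..<x}" using E(1,3) by (auto simp del: upt_Suc)
  also have "\<dots> = {1..x - 1}" unfolding set_w using x by auto
  finally have "set (y # E) = {1..x - 1}" .
  moreover have "subseq (y # E) ?w"
    by (rule list_emb_Cons, rule subseq_Cons2, rule subseq_drop_many, rule subseq_order.order_refl)
  ultimately have "y # E \<in> Av k (x - 1)"
    using avoids_patterns_subseq[OF _ av] distinct_subseq[OF dist] unfolding Av_iff by blast
  moreover have "?w = insert_block n (n - x) (y # E)"
    using x by (simp add: insert_block_def del: upt_Suc)
  ultimately show ?thesis using E(1) \<open>n - x \<le> k - 2\<close> x y unfolding E(2)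
    by (intro exI[of _ "n - x"] conjI bexI[of _ "y # E"]) simp_all
qed

lemma Av_decomposition:
  assumes w: "w \<in> Av k n" and "n \<ge> 2"
  shows "(\<exists>v\<in>Av k (n - 1). w = insert_second n v) \<or>
    (\<exists>l\<le>min (k - 2) (n - 2). \<exists>u\<in>Av k (n - l - 1). w = insert_block n l u)"
proof -
  have set_w: "set w = {1..n}" and dist: "distinct w" and av: "avoids_patterns k w"
    using w by (auto simp: Av_iff)
  then obtain p q where pq: "w = p @ n # q"
    using \<open>n \<ge> 2\<close> by (metis atLeastAtMost_iff one_le_numeral order.trans split_list order_refl)
  have "\<forall>z\<in>set p. z < n" using set_w dist pq by fastforce
  then have "length p \<le> 2"
    using length_prefix_before_max[of p n q] av dist pq by (simp add: avoids_patterns_def)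
  then consider "p = []" | x where "p = [x]" | x y where "p = [x, y]"
    by (metis One_nat_def Suc_1 le_Suc_eq le_zero_eq length_0_conv length_Suc_conv)
  then show ?thesis
  proof cases
    case 1
    then have "q \<in> Av k (n - 1)" using Av_delete_max w pq by fastforce
    moreover from this have "q \<noteq> []" using \<open>n \<ge> 2\<close> by (auto simp: Av_iff)
    then have "w = insert_block n 0 q" using pq 1 by (simp add: insert_block_def)
    ultimately show ?thesis by (intro disjI2 exI[of _ 0] conjI bexI[of _ q]) simp_all
  next
    case (2 x)
    then have "x # q \<in> Av k (n - 1)" using Av_delete_max w pq by fastforce
    moreover have "w = insert_second n (x # q)" using pq 2 by (simp add: insert_second_def)
    ultimately show ?thesis by blast
  next
    case (3 x y)
    then have "x # y # n # q \<in> Av k n" using w pq by simp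
    from Av_max_third[OF this] show ?thesis using pq 3 by simp
  qed
qed

section \<open>The recurrence\<close>

lemma insert_second_in_Av:
  assumes "v \<in> Av k (n - 1)" "n \<ge> 2" "k \<ge> 2"
  shows "insert_second n v \<in> Av k n"
proof -
  obtain x t where v: "v = x # t" using assms(1,2) by (cases v) (auto simp: Av_iff)
  then have "[x] @ Suc (n - 1) # t \<in> Av k (Suc (n - 1))"
    using assms by (intro Av_insert_max) auto
  then show ?thesis using v assms(2) by (simp add: insert_second_def)
qed

lemma insert_block_in_Av:
  assumes "u \<in> Av k (m - 1)" "m \<ge> 2" "l \<le> k - 2" "k \<ge> 2"
  shows "insert_block (m + l) l u \<in> Av k (m + l)"
  using assms(3)
proof (induction l)
  case 0
  have "[] @ Suc (m - 1) # u \<in> Av k (Suc (m - 1))"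
    using assms(1,4) by (intro Av_insert_max) auto
  moreover have "u \<noteq> []" using assms(1,2) by (auto simp: Av_iff)
  ultimately show ?case using assms(2) by (simp add: insert_block_def)
next
  case (Suc l)
  obtain h t where u: "u = h # t" using assms(1,2) by (cases u) (auto simp: Av_iff)
  define t' where "t' = rev [m + 1..<m + l + 1] @ t"
  have "[m, h] @ t' \<in> Av k (m + l)"
    using Suc u by (simp add: insert_block_def t'_def)
  moreover have "h < m" using assms(1,2) u by (fastforce simp: Av_iff)
  moreover have "\<not> has_decreasing_above (k - 2) m t'"
  proof
    assume "has_decreasing_above (k - 2) m t'"
    then have "k - 2 \<le> card {z \<in> set t'. m < z}" by (rule has_decreasing_above_le_card)
    also have "\<dots> \<le> card {m + 1..<m + l + 1}"
      using assms(1) u by (intro card_mono) (auto simp: t'_def Av_iff simp del: upt_Suc)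
    finally show False using Suc.prems by simp
  qed
  ultimately have "[m, h] @ Suc (m + l) # t' \<in> Av k (Suc (m + l))"
    using assms(4) by (intro Av_insert_max) auto
  then show ?case by (simp add: insert_block_def t'_def u)
qed

lemma Av_eq_Union:
  assumes "n \<ge> 2" "k \<ge> 2"
  shows "Av k n = insert_second n ` Av k (n - 1) \<union>
    (\<Union>l\<le>min (k - 2) (n - 2). insert_block n l ` Av k (n - l - 1))"
proof
  show "Av k n \<subseteq> insert_second n ` Av k (n - 1) \<union>
      (\<Union>l\<le>min (k - 2) (n - 2). insert_block n l ` Av k (n - l - 1))"
    using Av_decomposition[where k = k, OF _ assms(1)] by blast
  have "insert_block n l u \<in> Av k n" if "l \<le> min (k - 2) (n - 2)" "u \<in> Av k (n - l - 1)" for l u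
  proof -
    have "2 \<le> n - l" using that(1) assms(1) by linarith
    then show ?thesis using insert_block_in_Av[of u k "n - l" l] that assms by simp
  qed
  then show "insert_second n ` Av k (n - 1) \<union>
      (\<Union>l\<le>min (k - 2) (n - 2). insert_block n l ` Av k (n - l - 1)) \<subseteq> Av k n"
    using insert_second_in_Av[OF _ assms] by blast
qed

lemma inj_on_insert_second: "inj_on (insert_second n) {v. v \<noteq> []}"
  by (intro inj_onI list.expand) (auto simp: insert_second_def)

lemma inj_on_insert_block: "inj_on (insert_block n l) {u. u \<noteq> []}"
  by (intro inj_onI list.expand) (auto simp: insert_block_def)

lemma insert_block_shape:
  assumes "u \<in> Av k (n - l - 1)" "l \<le> n - 2" "n \<ge> 2"
  shows "hd (insert_block n l u) = n - l" "insert_block n l u ! 1 < n"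
proof -
  have "u \<noteq> []" using assms by (intro Av_nonempty) auto
  then have "hd u \<in> {1..n - l - 1}" using assms(1) hd_in_set[of u] by (simp add: Av_iff)
  then show "hd (insert_block n l u) = n - l" "insert_block n l u ! 1 < n"
    by (auto simp: insert_block_def simp del: upt_Suc)
qed

lemma card_Av_recurrence:
  assumes "n \<ge> 2" "k \<ge> 2"
  shows "card (Av k n) = card (Av k (n - 1)) + (\<Sum>l\<le>min (k - 2) (n - 2). card (Av k (n - l - 1)))"
proof -
  let ?L = "{..min (k - 2) (n - 2)}"
  let ?S = "insert_second n ` Av k (n - 1)"
  let ?B = "\<lambda>l. insert_block n l ` Av k (n - l - 1)"
  have nonempty: "Av k m \<subseteq> {u. u \<noteq> []}" if "m \<ge> 1" for m
    using Av_nonempty that by blast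
  have "?S \<inter> (\<Union>l\<in>?L. ?B l) = {}"
  proof (rule equals0I)
    fix w assume "w \<in> ?S \<inter> (\<Union>l\<in>?L. ?B l)"
    then obtain v l u where "w = insert_second n v" "l \<in> ?L" "u \<in> Av k (n - l - 1)"
      "w = insert_block n l u"
      by blast
    then show False using insert_block_shape(2)[of u k n l] assms(1) by (simp add: insert_second_def)
  qed
  then have "card (Av k n) = card ?S + card (\<Union>l\<in>?L. ?B l)"
    unfolding Av_eq_Union[OF assms] by (intro card_Un_disjoint) (auto simp: finite_Av)
  also have "card (\<Union>l\<in>?L. ?B l) = (\<Sum>l\<in>?L. card (?B l))"
  proof (rule card_UN_disjoint)
    show "\<forall>l\<in>?L. \<forall>l'\<in>?L. l \<noteq> l' \<longrightarrow> ?B l \<inter> ?B l' = {}"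
    proof (intro ballI impI equals0I)
      fix l l' w assume l: "l \<in> ?L" "l' \<in> ?L" "l \<noteq> l'" and "w \<in> ?B l \<inter> ?B l'"
      then obtain u u' where "u \<in> Av k (n - l - 1)" "u' \<in> Av k (n - l' - 1)"
        "w = insert_block n l u" "w = insert_block n l' u'"
        by blast
      then have "n - l = n - l'"
        using insert_block_shape(1)[of u k n l] insert_block_shape(1)[of u' k n l'] l assms(1)
        by simp
      moreover have "l \<le> n - 2" "l' \<le> n - 2" using l by auto
      ultimately show False using l(3) assms(1) by arith
    qed
  qed (simp_all add: finite_Av)
  also have "card ?S = card (Av k (n - 1))"
    using inj_on_subset[OF inj_on_insert_second nonempty] assms(1) by (simp add: card_image)
  also have "(\<Sum>l\<in>?L. card (?B l)) = (\<Sum>l\<in>?L. card (Av k (n - l - 1)))"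
    using assms(1)
    by (intro sum.cong refl card_image inj_on_subset[OF inj_on_insert_block nonempty]) auto
  finally show ?thesis .
qed

section \<open>The generating function\<close>

unbundle fps_syntax

lemma fps_recurrence_equation:
  fixes a :: "nat \<Rightarrow> 'a::field"
  assumes k: "k \<ge> 2" and a1: "a 1 = 1"
    and rec: "\<And>n. n \<ge> 2 \<Longrightarrow> a n = a (n - 1) + (\<Sum>l\<le>min (k - 2) (n - 2). a (n - l - 1))"
  defines "B \<equiv> Abs_fps (\<lambda>n. if n = 0 then 0 else a n)" and "G \<equiv> \<Sum>l<k - 1. fps_X ^ l"
  shows "B = fps_X + fps_X * B + fps_X * G * B"
proof -
  have GB: "(G * B) $ m = (\<Sum>l\<le>min (k - 2) (m - 1). a (m - l))" if "m \<ge> 1" for m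
  proof -
    have "(G * B) $ m = (\<Sum>l\<in>{..k - 2}. if l < m then a (m - l) else 0)"
      unfolding G_def sum_distrib_right fps_sum_nth fps_X_power_mult_nth
      using k by (intro sum.cong) (auto simp: B_def)
    also have "\<dots> = (\<Sum>l\<in>{l\<in>{..k - 2}. l < m}. a (m - l))"
      by (rule sum.inter_filter[symmetric]) simp
    also have "{l\<in>{..k - 2}. l < m} = {..min (k - 2) (m - 1)}"
      using that by auto
    finally show ?thesis .
  qed
  show ?thesis
  proof (rule fps_ext)
    fix n :: nat
    consider "n = 0" | "n = 1" | "n \<ge> 2" by linarith
    then show "B $ n = (fps_X + fps_X * B + fps_X * G * B) $ n"
    proof cases
      case 3
      then show ?thesis
        using rec[OF 3] GB[of "n - 1"] by (simp add: B_def mult.assoc numeral_2_eq_2)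
    qed (use a1 in \<open>simp_all add: B_def mult.assoc\<close>)
  qed
qed

lemma fps_of_recurrence:
  fixes a :: "nat \<Rightarrow> 'a::field"
  assumes k: "k \<ge> 2" and a0: "a 0 = 1" and a1: "a 1 = 1"
    and rec: "\<And>n. n \<ge> 2 \<Longrightarrow> a n = a (n - 1) + (\<Sum>l\<le>min (k - 2) (n - 2). a (n - l - 1))"
  shows "Abs_fps a = (1 - 2 * fps_X + fps_X ^ k) / (1 - 3 * fps_X + fps_X ^ 2 + fps_X ^ k)"
proof -
  define X where "X = (fps_X :: 'a fps)"
  define B where "B = Abs_fps (\<lambda>n. if n = 0 then 0 else a n)"
  define G where "G = (\<Sum>l<k - 1. X ^ l)"
  have B_rec: "B = X + X * B + X * G * B"
    unfolding B_def G_def X_def using fps_recurrence_equation[OF k a1 rec] by simp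
  have "(1 - X) * G = 1 - X ^ (k - 1)" unfolding G_def by (rule one_diff_power_eq[symmetric])
  then have XG: "X * ((1 - X) * G) = X - X ^ k"
    using k by (simp add: right_diff_distrib power_Suc[symmetric])
  have "B * (1 - 3 * X + X ^ 2 + X ^ k) = B * ((1 - X) * (1 - X) - X * ((1 - X) * G))"
    unfolding XG by (simp add: algebra_simps power2_eq_square numeral_3_eq_3)
  also have "\<dots> = (1 - X) * (B - X * B - X * G * B)" by (simp add: algebra_simps)
  also have "B - X * B - X * G * B = X" using B_rec by (simp add: algebra_simps)
  finally have "(1 + B) * (1 - 3 * X + X ^ 2 + X ^ k) = 1 - 2 * X + X ^ k"
    by (simp add: algebra_simps power2_eq_square numeral_3_eq_3 numeral_2_eq_2)
  moreover have "Abs_fps a = 1 + B"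
    by (rule fps_ext) (simp add: B_def a0)
  moreover have "(1 - 3 * X + X ^ 2 + X ^ k) $ 0 \<noteq> 0"
    using k by (simp add: X_def)
  then have "1 - 3 * X + X ^ 2 + X ^ k \<noteq> 0" by (metis fps_zero_nth)
  ultimately show ?thesis unfolding X_def
    by (metis nonzero_mult_div_cancel_right)
qed

theorem mainTheorem9:
  fixes k :: nat
  assumes "k \<ge> 3"
  shows "Abs_fps (\<lambda>n. of_nat (card (avoiding_perms n {[1,2,3], [3,2,1,4], long_pattern k}))) =
    (1 - 2 * fps_X + fps_X ^ k) / (1 - 3 * fps_X + fps_X ^ 2 + fps_X ^ k :: rat fps)"
proof -
  have k: "k \<ge> 2" using assms by simp
  have "Abs_fps (\<lambda>n. of_nat (card (avoiding_perms n {[1,2,3], [3,2,1,4], long_pattern k}))) =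
      Abs_fps (\<lambda>n. of_nat (card (Av k n)) :: rat)"
    using avoiding_perms_eq_Av by simp
  also have "\<dots> = (1 - 2 * fps_X + fps_X ^ k) / (1 - 3 * fps_X + fps_X ^ 2 + fps_X ^ k)"
    using k card_Av_1[of k]
    by (intro fps_of_recurrence) (simp_all add: card_Av_0 card_Av_recurrence)
  finally show ?thesis .
qed

end
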